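(* Let $V$ be a proper (i.e. non-unitary) isometry on an infinite-dimensional separable Hilbert space and let $k\in\mathbb{N}$. Then $\overline{\Lambda_k(V)}=\overline{\mathbb{D}}$.
   Context: $\mathbb{D}=\{z\in\mathbb{C}:|z|<1\}$. For $T\in\mathcal{B}(\mathcal{L})$ and $k\in\mathbb{N}$, $\Lambda_k(T)=\{\lambda\in\mathbb{C}: PTP=\lambda P\text{ for some orthogonal projection } P \text{ of rank } k\}$. *)

theory Defs
  imports "HOL-Analysis.Analysis"
begin

text \<open>Every infinite-dimensional separable complex Hilbert space is unitarily equivalent
to l2(N), and the sets Lambda_k are invariant under unitary equivalence; we therefore
work concretely in l2 = square-summable sequences nat => complex.
Operators are functions (nat => complex) => (nat => complex); only their values on l2 matter.\<close>

definition l2 :: "(nat \<Rightarrow> complex) set" where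
  "l2 = {x. summable (\<lambda>n. (cmod (x n))^2)}"

definition l2_inner :: "(nat \<Rightarrow> complex) \<Rightarrow> (nat \<Rightarrow> complex) \<Rightarrow> complex" where
  "l2_inner x y = (\<Sum>n. x n * cnj (y n))"

definition l2_norm :: "(nat \<Rightarrow> complex) \<Rightarrow> real" where
  "l2_norm x = sqrt (\<Sum>n. (cmod (x n))^2)"

definition bounded_op :: "((nat \<Rightarrow> complex) \<Rightarrow> (nat \<Rightarrow> complex)) \<Rightarrow> bool" where
  "bounded_op T \<longleftrightarrow>
     (\<forall>x\<in>l2. T x \<in> l2) \<and>
     (\<forall>a x y. x \<in> l2 \<longrightarrow> y \<in> l2 \<longrightarrow> T (\<lambda>n. a * x n + y n) = (\<lambda>n. a * T x n + T y n)) \<and>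
     (\<exists>C. \<forall>x\<in>l2. l2_norm (T x) \<le> C * l2_norm x)"

definition isometry_op :: "((nat \<Rightarrow> complex) \<Rightarrow> (nat \<Rightarrow> complex)) \<Rightarrow> bool" where
  "isometry_op V \<longleftrightarrow> bounded_op V \<and> (\<forall>x\<in>l2. l2_norm (V x) = l2_norm x)"

definition unitary_op :: "((nat \<Rightarrow> complex) \<Rightarrow> (nat \<Rightarrow> complex)) \<Rightarrow> bool" where
  "unitary_op U \<longleftrightarrow> isometry_op U \<and> U ` l2 = l2"

definition range_dim :: "((nat \<Rightarrow> complex) \<Rightarrow> (nat \<Rightarrow> complex)) \<Rightarrow> nat \<Rightarrow> bool" where
  "range_dim P k \<longleftrightarrow>
     (\<exists>e :: nat \<Rightarrow> nat \<Rightarrow> complex.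
        (\<forall>i<k. e i \<in> l2) \<and>
        (\<forall>c. (\<lambda>n. \<Sum>i<k. c i * e i n) = (\<lambda>n. 0) \<longrightarrow> (\<forall>i<k. c i = 0)) \<and>
        P ` l2 = {(\<lambda>n. \<Sum>i<k. c i * e i n) | c. True})"

definition orth_proj_rank :: "nat \<Rightarrow> ((nat \<Rightarrow> complex) \<Rightarrow> (nat \<Rightarrow> complex)) \<Rightarrow> bool" where
  "orth_proj_rank k P \<longleftrightarrow>
     bounded_op P \<and>
     (\<forall>x\<in>l2. P (P x) = P x) \<and>
     (\<forall>x\<in>l2. \<forall>y\<in>l2. l2_inner (P x) y = l2_inner x (P y)) \<and>
     range_dim P k"

definition Lambda :: "nat \<Rightarrow> ((nat \<Rightarrow> complex) \<Rightarrow> (nat \<Rightarrow> complex)) \<Rightarrow> complex set" where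
  "Lambda k T = {\<mu>. \<exists>P. orth_proj_rank k P \<and> (\<forall>x\<in>l2. P (T (P x)) = (\<lambda>n. \<mu> * P x n))}"

end

theory Submission
  imports Defs
begin

text \<open>A proper isometry \<open>V\<close> leaves a unit vector \<open>e\<close> orthogonal to its range, and then
\<open>e, V e, V\<^sup>2 e, \<dots>\<close> is orthonormal: \<open>V\<close> contains a copy of the unilateral shift.
For \<open>|\<mu>| < 1\<close> the truncation \<open>x = \<Sum>n\<le>M. cnj \<mu> ^ n * V\<^sup>n e\<close> of an eigenvector of the backward
shift satisfies \<open><V x, x> / <x, x> = \<mu> * (\<Sum>n<M. r ^ n) / (\<Sum>n\<le>M. r ^ n)\<close> with \<open>r = |\<mu>|\<^sup>2\<close>.
Copies of \<open>x\<close> on \<open>k\<close> disjoint, separated blocks of the orbit form an orthonormal family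
\<open>u\<close> (after scaling) with \<open><V u\<^sub>i, u\<^sub>j> = 0\<close> for \<open>i \<noteq> j\<close>, so the projection onto its span
compresses \<open>V\<close> to that scalar. As \<open>M \<rightarrow> \<infinity>\<close> these scalars tend to \<open>\<mu>\<close>.
Conversely \<open>P V P = \<mu> P\<close> and \<open>P x = x \<noteq> 0\<close> give \<open>|\<mu>| \<parallel>x\<parallel>\<^sup>2 = |<V x, x>| \<le> \<parallel>x\<parallel>\<^sup>2\<close>.\<close>

section \<open>The sequence space \<open>l2\<close>\<close>

lemma l2_lin:
  assumes "x \<in> l2" "y \<in> l2"
  shows "(\<lambda>n. a * x n + y n) \<in> l2"
proof -
  have bound: "norm ((cmod (a * x n + y n))^2) \<le> 2 * (cmod a)^2 * (cmod (x n))^2 + 2 * (cmod (y n))^2" for n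
  proof -
    have "(cmod (a * x n + y n))^2 \<le> (cmod a * cmod (x n) + cmod (y n))^2"
      using norm_triangle_ineq[of "a * x n" "y n"] by (intro power_mono) (auto simp: norm_mult)
    also have "\<dots> \<le> 2 * (cmod a)^2 * (cmod (x n))^2 + 2 * (cmod (y n))^2"
      using sum_squares_bound[of "cmod a * cmod (x n)" "cmod (y n)"]
      by (simp add: power2_eq_square algebra_simps)
    finally show ?thesis by simp
  qed
  have "summable (\<lambda>n. 2 * (cmod a)^2 * (cmod (x n))^2 + 2 * (cmod (y n))^2)"
    using assms by (intro summable_add summable_mult) (auto simp: l2_def)
  then show ?thesis
    unfolding l2_def mem_Collect_eq using bound by (rule summable_comparison_test')
qed

lemma l2_zero: "(\<lambda>n. 0) \<in> l2"
  by (simp add: l2_def)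

lemma l2_scale: "x \<in> l2 \<Longrightarrow> (\<lambda>n. a * x n) \<in> l2"
  using l2_lin[OF _ l2_zero, of x a] by simp

definition unit_vec :: "nat \<Rightarrow> nat \<Rightarrow> complex" where
  "unit_vec j = (\<lambda>n. of_bool (n = j))"

lemma l2_unit_vec: "unit_vec j \<in> l2"
  unfolding l2_def mem_Collect_eq unit_vec_def by (rule summable_finite[of "{j}"]) auto

lemma summable_l2_inner_norm:
  assumes "x \<in> l2" "y \<in> l2"
  shows "summable (\<lambda>n. norm (x n * cnj (y n)))"
proof (rule summable_comparison_test')
  show "summable (\<lambda>n. ((cmod (x n))^2 + (cmod (y n))^2) / 2)"
    using assms by (intro summable_divide summable_add) (auto simp: l2_def)
  show "norm (norm (x n * cnj (y n))) \<le> ((cmod (x n))^2 + (cmod (y n))^2) / 2" for n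
    using sum_squares_bound[of "cmod (x n)" "cmod (y n)"] by (simp add: norm_mult power2_eq_square)
qed

lemma l2_inner_sums: "x \<in> l2 \<Longrightarrow> y \<in> l2 \<Longrightarrow> (\<lambda>n. x n * cnj (y n)) sums l2_inner x y"
  unfolding l2_inner_def by (rule summable_sums[OF summable_norm_cancel[OF summable_l2_inner_norm]])

lemma l2_inner_lin_left:
  assumes "x \<in> l2" "y \<in> l2" "z \<in> l2"
  shows "l2_inner (\<lambda>n. a * x n + y n) z = a * l2_inner x z + l2_inner y z"
proof -
  have "(\<lambda>n. a * (x n * cnj (z n)) + y n * cnj (z n)) sums (a * l2_inner x z + l2_inner y z)"
    by (rule sums_add[OF sums_mult[OF l2_inner_sums[OF assms(1,3)]] l2_inner_sums[OF assms(2,3)]])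
  then show ?thesis
    by (simp add: l2_inner_def sums_iff algebra_simps)
qed

lemma l2_inner_commute:
  assumes "x \<in> l2" "y \<in> l2"
  shows "l2_inner y x = cnj (l2_inner x y)"
proof -
  have "(\<lambda>n. cnj (x n * cnj (y n))) sums cnj (l2_inner x y)"
    by (rule iffD2[OF sums_cnj l2_inner_sums[OF assms]])
  then have "(\<lambda>n. y n * cnj (x n)) sums cnj (l2_inner x y)"
    by (simp add: mult.commute)
  then show ?thesis
    by (simp add: l2_inner_def sums_iff)
qed

lemma l2_inner_lin_right:
  assumes "x \<in> l2" "y \<in> l2" "z \<in> l2"
  shows "l2_inner z (\<lambda>n. a * x n + y n) = cnj a * l2_inner z x + l2_inner z y"
proof -
  have "l2_inner z (\<lambda>n. a * x n + y n) = cnj (l2_inner (\<lambda>n. a * x n + y n) z)"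
    by (rule l2_inner_commute[OF l2_lin[OF assms(1,2)] assms(3)])
  then show ?thesis
    by (simp add: l2_inner_lin_left assms l2_inner_commute[OF assms(3,1)] l2_inner_commute[OF assms(3,2)])
qed

lemma l2_inner_zero_left: "l2_inner (\<lambda>n. 0) z = 0"
  by (simp add: l2_inner_def)

lemma l2_inner_scale_left: "x \<in> l2 \<Longrightarrow> z \<in> l2 \<Longrightarrow> l2_inner (\<lambda>n. a * x n) z = a * l2_inner x z"
  using l2_inner_lin_left[OF _ l2_zero, of x z a] by (simp add: l2_inner_zero_left)

lemma l2_inner_scale_right: "x \<in> l2 \<Longrightarrow> z \<in> l2 \<Longrightarrow> l2_inner z (\<lambda>n. a * x n) = cnj a * l2_inner z x"
  using l2_inner_lin_right[OF _ l2_zero, of x z a] l2_inner_commute[OF l2_zero, of z]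
  by (simp add: l2_inner_zero_left)

lemma l2_inner_unit_vec: "x \<in> l2 \<Longrightarrow> l2_inner x (unit_vec j) = x j"
proof -
  have "(\<lambda>n. x n * cnj (unit_vec j n)) = (\<lambda>n. if n = j then x j else 0)"
    by (auto simp: unit_vec_def fun_eq_iff)
  then show ?thesis
    using sums_single[of j "\<lambda>_. x j"] by (simp add: l2_inner_def sums_iff)
qed

lemma l2_norm_nonneg: "x \<in> l2 \<Longrightarrow> 0 \<le> l2_norm x"
  by (simp add: l2_norm_def l2_def suminf_nonneg)

lemma l2_norm_square: "x \<in> l2 \<Longrightarrow> (l2_norm x)^2 = (\<Sum>n. (cmod (x n))^2)"
  by (simp add: l2_norm_def l2_def suminf_nonneg)

lemma l2_inner_self:
  assumes "x \<in> l2" shows "l2_inner x x = of_real ((l2_norm x)^2)"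
proof -
  have "l2_inner x x = (\<Sum>n. of_real ((cmod (x n))^2))"
    unfolding l2_inner_def by (intro suminf_cong) (rule complex_norm_square[symmetric])
  also have "\<dots> = of_real (\<Sum>n. (cmod (x n))^2)"
    using assms by (simp add: suminf_of_real l2_def)
  finally show ?thesis using l2_norm_square[OF assms] by simp
qed

lemma l2_norm_eq_0_iff: "x \<in> l2 \<Longrightarrow> l2_norm x = 0 \<longleftrightarrow> x = (\<lambda>n. 0)"
  using l2_norm_square[of x] suminf_eq_zero_iff[of "\<lambda>n. (cmod (x n))^2"]
  by (auto simp: l2_def fun_eq_iff)

lemma l2_cauchy_schwarz:
  assumes "x \<in> l2" "y \<in> l2"
  shows "cmod (l2_inner x y) \<le> l2_norm x * l2_norm y"
proof -
  have partial: "(\<Sum>n<N. norm (x n * cnj (y n))) \<le> l2_norm x * l2_norm y" for N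
  proof -
    have "(\<Sum>n<N. norm (x n * cnj (y n)))
        \<le> L2_set (\<lambda>n. cmod (x n)) {..<N} * L2_set (\<lambda>n. cmod (y n)) {..<N}"
      using L2_set_mult_ineq[of "\<lambda>n. cmod (x n)" "\<lambda>n. cmod (y n)"] by (simp add: norm_mult)
    also have "\<dots> \<le> l2_norm x * l2_norm y"
      using assms unfolding L2_set_def l2_norm_def l2_def
      by (intro mult_mono real_sqrt_le_mono sum_le_suminf) (auto intro: suminf_nonneg sum_nonneg)
    finally show ?thesis .
  qed
  have "cmod (l2_inner x y) \<le> (\<Sum>n. norm (x n * cnj (y n)))"
    unfolding l2_inner_def by (rule summable_norm[OF summable_l2_inner_norm[OF assms]])
  also have "\<dots> \<le> l2_norm x * l2_norm y"
    by (rule suminf_le_const[OF summable_l2_inner_norm[OF assms] partial])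
  finally show ?thesis .
qed

lemma l2_norm_lin_square:
  assumes "x \<in> l2" "y \<in> l2"
  shows "(l2_norm (\<lambda>n. a * x n + y n))^2
    = (cmod a)^2 * (l2_norm x)^2 + 2 * Re (a * l2_inner x y) + (l2_norm y)^2"
proof -
  have "l2_inner (\<lambda>n. a * x n + y n) (\<lambda>n. a * x n + y n)
      = a * l2_inner x (\<lambda>n. a * x n + y n) + l2_inner y (\<lambda>n. a * x n + y n)"
    by (rule l2_inner_lin_left[OF assms l2_lin[OF assms]])
  also have "\<dots> = a * cnj a * l2_inner x x + a * l2_inner x y + cnj (a * l2_inner x y) + l2_inner y y"
    unfolding l2_inner_lin_right[OF assms assms(1)] l2_inner_lin_right[OF assms assms(2)]
      l2_inner_commute[OF assms] by (simp add: algebra_simps)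
  finally have "Re (l2_inner (\<lambda>n. a * x n + y n) (\<lambda>n. a * x n + y n))
      = Re (a * cnj a * l2_inner x x) + 2 * Re (a * l2_inner x y) + Re (l2_inner y y)"
    by simp
  then show ?thesis
    using assms by (simp add: l2_inner_self l2_lin complex_norm_square[symmetric] del: of_real_power)
qed

definition lin_comb :: "(nat \<Rightarrow> complex) \<Rightarrow> (nat \<Rightarrow> nat \<Rightarrow> complex) \<Rightarrow> nat \<Rightarrow> nat \<Rightarrow> complex" where
  "lin_comb c u N = (\<lambda>t. \<Sum>i<N. c i * u i t)"

lemma lin_comb_0: "lin_comb c u 0 = (\<lambda>t. 0)"
  by (simp add: lin_comb_def)

lemma lin_comb_Suc: "lin_comb c u (Suc N) = (\<lambda>t. c N * u N t + lin_comb c u N t)"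
  unfolding lin_comb_def by (simp add: add.commute)

lemma lin_comb_cong: "(\<And>i. i < N \<Longrightarrow> c i = d i) \<Longrightarrow> lin_comb c u N = lin_comb d u N"
  unfolding lin_comb_def by (intro ext sum.cong) auto

lemma lin_comb_lin:
  "lin_comb (\<lambda>i. a * c i + d i) u N = (\<lambda>t. a * lin_comb c u N t + lin_comb d u N t)"
  by (auto simp: lin_comb_def fun_eq_iff sum.distrib sum_distrib_left algebra_simps)

lemma lin_comb_scale: "lin_comb (\<lambda>i. a * c i) u N = (\<lambda>t. a * lin_comb c u N t)"
  by (simp add: lin_comb_def fun_eq_iff sum_distrib_left mult.assoc)

lemma lin_comb_unit_vec: "lin_comb c unit_vec N = (\<lambda>n. if n < N then c n else 0)"
  by (auto simp: lin_comb_def unit_vec_def fun_eq_iff)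

lemma l2_lin_comb: "(\<And>i. i < N \<Longrightarrow> u i \<in> l2) \<Longrightarrow> lin_comb c u N \<in> l2"
  by (induction N) (auto simp: lin_comb_0 lin_comb_Suc l2_zero intro: l2_lin)

lemma l2_inner_lin_comb_left:
  assumes "\<And>i. i < N \<Longrightarrow> u i \<in> l2" "z \<in> l2"
  shows "l2_inner (lin_comb c u N) z = (\<Sum>i<N. c i * l2_inner (u i) z)"
  using assms(1)
proof (induction N)
  case (Suc N)
  have "l2_inner (lin_comb c u (Suc N)) z = c N * l2_inner (u N) z + l2_inner (lin_comb c u N) z"
    unfolding lin_comb_Suc by (rule l2_inner_lin_left) (use Suc.prems assms(2) l2_lin_comb in auto)
  then show ?case
    using Suc by (simp add: add.commute)
qed (simp add: lin_comb_0 l2_inner_zero_left)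

lemma l2_inner_lin_comb_right:
  assumes "\<And>i. i < N \<Longrightarrow> u i \<in> l2" "z \<in> l2"
  shows "l2_inner z (lin_comb c u N) = (\<Sum>i<N. cnj (c i) * l2_inner z (u i))"
proof -
  have "l2_inner z (lin_comb c u N) = cnj (l2_inner (lin_comb c u N) z)"
    by (rule l2_inner_commute[OF l2_lin_comb[OF assms(1)] assms(2)])
  also have "\<dots> = (\<Sum>i<N. cnj (c i) * cnj (l2_inner (u i) z))"
    by (simp add: l2_inner_lin_comb_left assms)
  also have "\<dots> = (\<Sum>i<N. cnj (c i) * l2_inner z (u i))"
    by (intro sum.cong refl) (simp add: l2_inner_commute[OF assms(2)] assms(1))
  finally show ?thesis .
qed

lemma l2_inner_lin_comb:
  assumes "\<And>i. i < N \<Longrightarrow> u i \<in> l2" "\<And>j. j < M \<Longrightarrow> v j \<in> l2"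
  shows "l2_inner (lin_comb c u N) (lin_comb d v M)
    = (\<Sum>i<N. \<Sum>j<M. c i * cnj (d j) * l2_inner (u i) (v j))"
  using assms
  by (simp add: l2_inner_lin_comb_left l2_inner_lin_comb_right l2_lin_comb sum_distrib_left
      mult_ac sum.swap[of _ "{..<N}"])

(* in the shape \<open>a * x + y\<close> of the linearity clause of bounded_op_def *)
lemma tail_eq_lin_comb_unit_vec:
  "(\<lambda>n. if n < N then 0 else x n) = (\<lambda>n. - 1 * lin_comb x unit_vec N n + x n)"
  by (simp add: lin_comb_unit_vec fun_eq_iff)

lemma l2_tail: "x \<in> l2 \<Longrightarrow> (\<lambda>n. if n < N then 0 else x n) \<in> l2"
  unfolding tail_eq_lin_comb_unit_vec by (rule l2_lin[OF l2_lin_comb[OF l2_unit_vec]])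

lemma l2_norm_tail_tendsto_0:
  assumes x: "x \<in> l2"
  shows "(\<lambda>N. l2_norm (\<lambda>n. if n < N then 0 else x n)) \<longlonglongrightarrow> 0"
proof -
  have "(l2_norm (\<lambda>n. if n < N then 0 else x n))^2 = (\<Sum>n. (cmod (x (n + N)))^2)" for N
  proof -
    have "summable (\<lambda>n. (cmod (if n < N then 0 else x n))^2)"
      using l2_tail[OF x] by (simp add: l2_def)
    from suminf_split_initial_segment[OF this, of N] show ?thesis
      by (simp add: l2_norm_square[OF l2_tail[OF x]])
  qed
  moreover have "(\<lambda>N. \<Sum>n. (cmod (x (n + N)))^2) \<longlonglongrightarrow> 0"
    using x by (intro suminf_exist_split2) (simp add: l2_def)
  ultimately have "(\<lambda>N. sqrt ((l2_norm (\<lambda>n. if n < N then 0 else x n))^2)) \<longlonglongrightarrow> sqrt 0"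
    by (intro tendsto_real_sqrt) simp
  then show ?thesis
    using l2_norm_nonneg[OF l2_tail[OF x]] by simp
qed

section \<open>Orthonormal families\<close>

lemma sum_lessThan_mult_of_bool_eq:
  fixes f :: "nat \<Rightarrow> 'a::semiring_1"
  shows "(\<Sum>i<N. f i * of_bool (i = j)) = (if j < N then f j else 0)"
proof -
  have "(\<Sum>i<N. f i * of_bool (i = j)) = sum f ({..<N} \<inter> {i. i = j})"
    by (rule sum_mult_of_bool_eq) simp
  also have "{..<N} \<inter> {i. i = j} = (if j < N then {j} else {})"
    by auto
  finally show ?thesis
    by simp
qed

definition orthonormal :: "nat set \<Rightarrow> (nat \<Rightarrow> nat \<Rightarrow> complex) \<Rightarrow> bool" where
  "orthonormal I u \<longleftrightarrow>
     (\<forall>i\<in>I. u i \<in> l2) \<and> (\<forall>i\<in>I. \<forall>j\<in>I. l2_inner (u i) (u j) = of_bool (i = j))"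

lemma orthonormal_unit_vec: "orthonormal I unit_vec"
  by (simp add: orthonormal_def l2_unit_vec l2_inner_unit_vec) (simp add: unit_vec_def eq_commute)

lemma orthonormal_lin_comb_coeff:
  assumes "orthonormal {..<N} u" "j < N"
  shows "l2_inner (lin_comb c u N) (u j) = c j"
proof -
  have "l2_inner (lin_comb c u N) (u j) = (\<Sum>i<N. c i * of_bool (i = j))"
    using assms by (simp add: orthonormal_def l2_inner_lin_comb_left)
  then show ?thesis
    using assms(2) by (simp only: sum_lessThan_mult_of_bool_eq if_True)
qed

lemma orthonormal_norm_lin_comb:
  assumes "orthonormal {..<N} u"
  shows "(l2_norm (lin_comb c u N))^2 = (\<Sum>i<N. (cmod (c i))^2)"
proof -
  have u: "\<And>i. i < N \<Longrightarrow> u i \<in> l2" and z: "lin_comb c u N \<in> l2"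
    using assms by (auto simp: orthonormal_def intro: l2_lin_comb)
  have "of_real ((l2_norm (lin_comb c u N))^2) = l2_inner (lin_comb c u N) (lin_comb c u N)"
    by (rule l2_inner_self[OF z, symmetric])
  also have "\<dots> = (\<Sum>i<N. c i * l2_inner (u i) (lin_comb c u N))"
    by (rule l2_inner_lin_comb_left[OF u z])
  also have "\<dots> = (\<Sum>i<N. c i * cnj (c i))"
    by (intro sum.cong refl)
      (simp add: l2_inner_commute[OF z u] orthonormal_lin_comb_coeff[OF assms])
  also have "\<dots> = of_real (\<Sum>i<N. (cmod (c i))^2)"
    by (simp add: of_real_sum complex_norm_square del: of_real_power)
  finally show ?thesis
    by (simp only: of_real_eq_iff)
qed

lemma bessel_inequality:
  assumes "orthonormal {..<N} u" "y \<in> l2"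
  shows "(\<Sum>i<N. (cmod (l2_inner y (u i)))^2) \<le> (l2_norm y)^2"
proof -
  define c where "c i = l2_inner y (u i)" for i
  define S where "S = (\<Sum>i<N. (cmod (c i))^2)"
  have u: "\<And>i. i < N \<Longrightarrow> u i \<in> l2" and z: "lin_comb c u N \<in> l2"
    using assms by (auto simp: orthonormal_def intro: l2_lin_comb)
  have "l2_inner (lin_comb c u N) y = (\<Sum>i<N. c i * cnj (c i))"
    by (simp add: l2_inner_lin_comb_left[OF u assms(2)] l2_inner_commute[OF assms(2) u] c_def)
  also have "\<dots> = of_real S"
    by (simp add: S_def of_real_sum complex_norm_square del: of_real_power)
  finally have "Re (l2_inner (lin_comb c u N) y) = S"
    by simp
  moreover have "(l2_norm (lin_comb c u N))^2 = S"
    unfolding S_def by (rule orthonormal_norm_lin_comb[OF assms(1)])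
  ultimately have "(l2_norm (\<lambda>n. - 1 * lin_comb c u N n + y n))^2 = (l2_norm y)^2 - S"
    using l2_norm_lin_square[OF z assms(2), of "- 1"] by simp
  then show ?thesis
    unfolding S_def c_def by (metis diff_ge_0_iff_ge zero_le_power2)
qed

lemma l2_bessel_coeffs:
  assumes "orthonormal UNIV u" "y \<in> l2"
  shows "(\<lambda>i. l2_inner y (u i)) \<in> l2"
proof -
  have "orthonormal {..<N} u" for N
    using assms(1) by (simp add: orthonormal_def)
  then show ?thesis
    unfolding l2_def mem_Collect_eq
    using bessel_inequality[OF _ assms(2)] by (intro summableI_nonneg_bounded) auto
qed

lemma orthonormal_inner_lin_comb:
  assumes "orthonormal UNIV e"
  shows "l2_inner (lin_comb a (\<lambda>n. e (f n)) N) (lin_comb b (\<lambda>m. e (g m)) M)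
    = (\<Sum>n<N. \<Sum>m<M. a n * cnj (b m) * of_bool (f n = g m))"
  using assms by (simp add: orthonormal_def l2_inner_lin_comb)

lemma block_index_eq_iff:
  fixes i j n m B :: nat
  assumes "n < B" "m < B"
  shows "i * B + n = j * B + m \<longleftrightarrow> i = j \<and> n = m"
proof
  assume eq: "i * B + n = j * B + m"
  have "i = (i * B + n) div B" "n = (i * B + n) mod B"
    using assms by simp_all
  moreover have "j = (j * B + m) div B" "m = (j * B + m) mod B"
    using assms by simp_all
  ultimately show "i = j \<and> n = m"
    using eq by metis
qed simp

lemma block_index_of_bool:
  fixes i j n m B :: nat
  assumes "n < B" "m < B"
  shows "of_bool (i * B + n = j * B + m) = (of_bool (i = j) * of_bool (m = n) :: 'a::semiring_1)"
  using block_index_eq_iff[OF assms] by auto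

lemma orthonormal_blocks_inner:
  assumes e: "orthonormal UNIV e" and B: "Suc M < B"
  shows "l2_inner (lin_comb a (\<lambda>n. e (i * B + n)) (Suc M)) (lin_comb a (\<lambda>n. e (j * B + n)) (Suc M))
      = of_bool (i = j) * (\<Sum>n<Suc M. a n * cnj (a n))"
proof -
  have "l2_inner (lin_comb a (\<lambda>n. e (i * B + n)) (Suc M)) (lin_comb a (\<lambda>n. e (j * B + n)) (Suc M))
      = (\<Sum>n<Suc M. \<Sum>m<Suc M. a n * cnj (a m) * of_bool (i * B + n = j * B + m))"
    by (rule orthonormal_inner_lin_comb[OF e])
  also have "\<dots> = (\<Sum>n<Suc M. \<Sum>m<Suc M. of_bool (i = j) * a n * cnj (a m) * of_bool (m = n))"
    using B by (intro sum.cong refl) (subst block_index_of_bool; simp add: mult_ac)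
  also have "\<dots> = (\<Sum>n<Suc M. if n < Suc M then of_bool (i = j) * a n * cnj (a n) else 0)"
    by (simp only: sum_lessThan_mult_of_bool_eq)
  also have "\<dots> = of_bool (i = j) * (\<Sum>n<Suc M. a n * cnj (a n))"
    by (simp add: sum_distrib_left mult.assoc)
  finally show ?thesis .
qed

lemma orthonormal_shifted_blocks_inner:
  assumes e: "orthonormal UNIV e" and B: "Suc M < B"
  shows "l2_inner (lin_comb a (\<lambda>n. e (i * B + Suc n)) (Suc M)) (lin_comb a (\<lambda>n. e (j * B + n)) (Suc M))
      = of_bool (i = j) * (\<Sum>n<M. a n * cnj (a (Suc n)))"
proof -
  have "l2_inner (lin_comb a (\<lambda>n. e (i * B + Suc n)) (Suc M)) (lin_comb a (\<lambda>n. e (j * B + n)) (Suc M))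
      = (\<Sum>n<Suc M. \<Sum>m<Suc M. a n * cnj (a m) * of_bool (i * B + Suc n = j * B + m))"
    by (rule orthonormal_inner_lin_comb[OF e])
  also have "\<dots> = (\<Sum>n<Suc M. \<Sum>m<Suc M. of_bool (i = j) * a n * cnj (a m) * of_bool (m = Suc n))"
    using B by (intro sum.cong refl) (subst block_index_of_bool; simp add: mult_ac)
  also have "\<dots> = (\<Sum>n<Suc M. if Suc n < Suc M then of_bool (i = j) * a n * cnj (a (Suc n)) else 0)"
    by (simp only: sum_lessThan_mult_of_bool_eq)
  also have "\<dots> = of_bool (i = j) * (\<Sum>n<M. a n * cnj (a (Suc n)))"
    by (simp add: sum_distrib_left mult.assoc)
  finally show ?thesis .
qed

section \<open>Bounded operators and the higher-rank numerical range\<close>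

lemma bounded_op_l2: "bounded_op T \<Longrightarrow> x \<in> l2 \<Longrightarrow> T x \<in> l2"
  by (simp add: bounded_op_def)

lemma bounded_op_lin:
  "bounded_op T \<Longrightarrow> x \<in> l2 \<Longrightarrow> y \<in> l2 \<Longrightarrow> T (\<lambda>n. a * x n + y n) = (\<lambda>n. a * T x n + T y n)"
  by (simp add: bounded_op_def)

lemma bounded_op_zero:
  assumes "bounded_op T"
  shows "T (\<lambda>n. 0) = (\<lambda>n. 0)"
  using bounded_op_lin[OF assms l2_zero l2_zero, of "- 1"] by (simp add: fun_eq_iff)

lemma bounded_op_lin_comb:
  assumes "bounded_op T" "\<And>i. i < N \<Longrightarrow> u i \<in> l2"
  shows "T (lin_comb c u N) = lin_comb c (\<lambda>i. T (u i)) N"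
  using assms(2)
  by (induction N) (simp_all add: lin_comb_0 lin_comb_Suc bounded_op_zero[OF assms(1)]
      bounded_op_lin[OF assms(1)] l2_lin_comb)

lemma bounded_op_orthogonal_if_unit_vec_images:
  assumes T: "bounded_op T" and z: "z \<in> l2" and orth: "\<And>j. l2_inner (T (unit_vec j)) z = 0"
    and x: "x \<in> l2"
  shows "l2_inner (T x) z = 0"
proof -
  obtain C where C: "\<And>y. y \<in> l2 \<Longrightarrow> l2_norm (T y) \<le> C * l2_norm y"
    using T unfolding bounded_op_def by blast
  define tail where "tail N = (\<lambda>n. if n < N then 0 else x n)" for N
  have head: "lin_comb x unit_vec N \<in> l2" for N
    by (rule l2_lin_comb[OF l2_unit_vec])
  have l2_tail: "tail N \<in> l2" for N
    unfolding tail_def by (rule l2_tail[OF x])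
  have "l2_inner (T (lin_comb x unit_vec N)) z = 0" for N
    using z orth by (simp add: bounded_op_lin_comb[OF T l2_unit_vec] l2_inner_lin_comb_left
        bounded_op_l2[OF T l2_unit_vec])
  then have inner_tail: "l2_inner (T (tail N)) z = l2_inner (T x) z" for N
    unfolding tail_def tail_eq_lin_comb_unit_vec bounded_op_lin[OF T head x]
      l2_inner_lin_left[OF bounded_op_l2[OF T head] bounded_op_l2[OF T x] z]
    by simp
  have bound: "cmod (l2_inner (T x) z) \<le> C * l2_norm (tail N) * l2_norm z" for N
  proof -
    have "cmod (l2_inner (T x) z) \<le> l2_norm (T (tail N)) * l2_norm z"
      using l2_cauchy_schwarz[OF bounded_op_l2[OF T l2_tail] z] by (simp add: inner_tail)
    also have "\<dots> \<le> C * l2_norm (tail N) * l2_norm z"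
      by (rule mult_right_mono[OF C[OF l2_tail] l2_norm_nonneg[OF z]])
    finally show ?thesis .
  qed
  have "(\<lambda>N. C * l2_norm (tail N) * l2_norm z) \<longlonglongrightarrow> C * 0 * l2_norm z"
    unfolding tail_def by (intro tendsto_mult tendsto_const l2_norm_tail_tendsto_0[OF x])
  then have "cmod (l2_inner (T x) z) \<le> 0"
    using bound by (intro LIMSEQ_le_const) auto
  then show ?thesis
    by simp
qed

definition span_proj :: "nat \<Rightarrow> (nat \<Rightarrow> nat \<Rightarrow> complex) \<Rightarrow> (nat \<Rightarrow> complex) \<Rightarrow> nat \<Rightarrow> complex" where
  "span_proj k u y = lin_comb (\<lambda>i. l2_inner y (u i)) u k"

lemma span_proj_lin_comb:
  assumes "orthonormal {..<k} u"
  shows "span_proj k u (lin_comb c u k) = lin_comb c u k"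
  unfolding span_proj_def by (rule lin_comb_cong) (simp add: orthonormal_lin_comb_coeff[OF assms])

lemma bounded_op_span_proj:
  assumes "orthonormal {..<k} u"
  shows "bounded_op (span_proj k u)"
  unfolding bounded_op_def
proof (intro conjI ballI allI impI)
  let ?P = "span_proj k u"
  have u: "\<And>i. i < k \<Longrightarrow> u i \<in> l2"
    using assms by (simp add: orthonormal_def)
  show "?P y \<in> l2" for y
    unfolding span_proj_def by (rule l2_lin_comb) (rule u)
  show "?P (\<lambda>n. a * x n + y n) = (\<lambda>n. a * ?P x n + ?P y n)" if "x \<in> l2" "y \<in> l2" for a x y
  proof -
    have "lin_comb (\<lambda>i. l2_inner (\<lambda>n. a * x n + y n) (u i)) u k
        = lin_comb (\<lambda>i. a * l2_inner x (u i) + l2_inner y (u i)) u k"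
      by (rule lin_comb_cong) (simp add: l2_inner_lin_left that u)
    then show ?thesis
      by (simp add: span_proj_def lin_comb_lin)
  qed
  have "l2_norm (?P y) \<le> 1 * l2_norm y" if "y \<in> l2" for y
  proof -
    have "(l2_norm (?P y))^2 = (\<Sum>i<k. (cmod (l2_inner y (u i)))^2)"
      unfolding span_proj_def by (rule orthonormal_norm_lin_comb[OF assms])
    also have "\<dots> \<le> (l2_norm y)^2"
      by (rule bessel_inequality[OF assms that])
    finally show ?thesis
      using power2_le_imp_le[OF _ l2_norm_nonneg[OF that]] by simp
  qed
  then show "\<exists>C. \<forall>y\<in>l2. l2_norm (?P y) \<le> C * l2_norm y"
    by blast
qed

lemma range_dim_span_proj:
  assumes "orthonormal {..<k} u"
  shows "range_dim (span_proj k u) k"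
  unfolding range_dim_def
proof (intro exI conjI allI impI)
  let ?P = "span_proj k u"
  show u: "\<And>i. i < k \<Longrightarrow> u i \<in> l2"
    using assms by (simp add: orthonormal_def)
  show "c i = 0" if "(\<lambda>n. \<Sum>i<k. c i * u i n) = (\<lambda>n. 0)" "i < k" for c i
    using orthonormal_lin_comb_coeff[OF assms that(2), of c] that(1)
    by (simp add: lin_comb_def l2_inner_zero_left)
  show "?P ` l2 = {\<lambda>n. \<Sum>i<k. c i * u i n |c. True}"
  proof
    show "?P ` l2 \<subseteq> {\<lambda>n. \<Sum>i<k. c i * u i n |c. True}"
      by (auto simp: span_proj_def lin_comb_def)
    show "{\<lambda>n. \<Sum>i<k. c i * u i n |c. True} \<subseteq> ?P ` l2"
    proof
      fix v assume "v \<in> {\<lambda>n. \<Sum>i<k. c i * u i n |c. True}"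
      then obtain c where v: "v = lin_comb c u k"
        by (auto simp: lin_comb_def)
      then have "v = ?P v"
        by (simp add: span_proj_lin_comb[OF assms])
      moreover have "v \<in> l2"
        unfolding v by (rule l2_lin_comb) (rule u)
      ultimately show "v \<in> ?P ` l2"
        by (rule image_eqI)
    qed
  qed
qed

lemma orth_proj_rank_span_proj:
  assumes "orthonormal {..<k} u"
  shows "orth_proj_rank k (span_proj k u)"
proof -
  let ?P = "span_proj k u"
  have u: "\<And>i. i < k \<Longrightarrow> u i \<in> l2"
    using assms by (simp add: orthonormal_def)
  have "?P (?P y) = ?P y" for y
    by (simp only: span_proj_def[of k u y] span_proj_lin_comb[OF assms])
  moreover have "l2_inner (?P y) z = l2_inner y (?P z)" if "y \<in> l2" "z \<in> l2" for y z
  proof -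
    have "l2_inner (?P y) z = (\<Sum>i<k. l2_inner y (u i) * l2_inner (u i) z)"
      unfolding span_proj_def by (rule l2_inner_lin_comb_left[OF u that(2)])
    also have "\<dots> = (\<Sum>i<k. cnj (l2_inner z (u i)) * l2_inner y (u i))"
      by (intro sum.cong refl) (simp add: l2_inner_commute[OF that(2) u])
    also have "\<dots> = l2_inner y (?P z)"
      unfolding span_proj_def by (rule l2_inner_lin_comb_right[OF u that(1), symmetric])
    finally show ?thesis .
  qed
  ultimately show ?thesis
    unfolding orth_proj_rank_def
    using bounded_op_span_proj[OF assms] range_dim_span_proj[OF assms] by blast
qed

lemma orthonormal_compression_in_Lambda:
  assumes T: "bounded_op T" and u: "orthonormal {..<k} u"
    and Tu: "\<And>i j. i < k \<Longrightarrow> j < k \<Longrightarrow> l2_inner (T (u i)) (u j) = \<mu> * of_bool (i = j)"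
  shows "\<mu> \<in> Lambda k T"
proof -
  let ?P = "span_proj k u"
  have l2_u: "\<And>i. i < k \<Longrightarrow> u i \<in> l2"
    using u by (simp add: orthonormal_def)
  have "?P (T (?P y)) = (\<lambda>n. \<mu> * ?P y n)" for y
  proof -
    have T_P: "T (?P y) = lin_comb (\<lambda>i. l2_inner y (u i)) (\<lambda>i. T (u i)) k"
      unfolding span_proj_def by (rule bounded_op_lin_comb[OF T l2_u])
    have "l2_inner (T (?P y)) (u j) = \<mu> * l2_inner y (u j)" if "j < k" for j
    proof -
      have "l2_inner (T (?P y)) (u j) = (\<Sum>i<k. l2_inner y (u i) * l2_inner (T (u i)) (u j))"
        unfolding T_P by (rule l2_inner_lin_comb_left) (simp_all add: bounded_op_l2[OF T] l2_u that)
      also have "\<dots> = (\<Sum>i<k. (\<mu> * l2_inner y (u i)) * of_bool (i = j))"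
        by (intro sum.cong refl) (simp add: Tu that)
      finally show ?thesis
        using that by (simp only: sum_lessThan_mult_of_bool_eq if_True)
    qed
    then have "?P (T (?P y)) = lin_comb (\<lambda>j. \<mu> * l2_inner y (u j)) u k"
      unfolding span_proj_def[of k u "T (?P y)"] by (rule lin_comb_cong)
    then show ?thesis
      by (simp add: lin_comb_scale span_proj_def)
  qed
  then show ?thesis
    unfolding Lambda_def using orth_proj_rank_span_proj[OF u] by blast
qed

lemma range_dim_nonzero:
  assumes "range_dim P k" "0 < k"
  shows "\<exists>x\<in>P ` l2. x \<noteq> (\<lambda>n. 0)"
proof -
  obtain e where indep: "\<And>c. (\<lambda>n. \<Sum>i<k. c i * e i n) = (\<lambda>n. 0) \<Longrightarrow> \<forall>i<k. c i = 0"
    and range: "P ` l2 = {(\<lambda>n. \<Sum>i<k. c i * e i n) | c. True}"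
    using assms(1) unfolding range_dim_def by blast
  define c :: "nat \<Rightarrow> complex" where "c i = of_bool (i = 0)" for i
  have "(\<lambda>n. \<Sum>i<k. c i * e i n) \<in> P ` l2"
    unfolding range by blast
  moreover have "(\<lambda>n. \<Sum>i<k. c i * e i n) \<noteq> (\<lambda>n. 0)"
    using indep[of c] assms(2) by (auto simp: c_def)
  ultimately show ?thesis
    by blast
qed

lemma Lambda_eigenvector:
  assumes T: "bounded_op T" and "\<mu> \<in> Lambda k T" "0 < k"
  shows "\<exists>x\<in>l2. x \<noteq> (\<lambda>n. 0) \<and> \<mu> * l2_inner x x = l2_inner (T x) x"
proof -
  obtain P where P: "orth_proj_rank k P" and PTP: "\<And>x. x \<in> l2 \<Longrightarrow> P (T (P x)) = (\<lambda>n. \<mu> * P x n)"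
    using assms(2) unfolding Lambda_def by blast
  have "bounded_op P" and idem: "\<And>x. x \<in> l2 \<Longrightarrow> P (P x) = P x"
    and self_adj: "\<And>x y. x \<in> l2 \<Longrightarrow> y \<in> l2 \<Longrightarrow> l2_inner (P x) y = l2_inner x (P y)"
    and "range_dim P k"
    using P unfolding orth_proj_rank_def by auto
  then obtain x where "x \<in> P ` l2" "x \<noteq> (\<lambda>n. 0)"
    using range_dim_nonzero \<open>0 < k\<close> by blast
  then obtain y where y: "y \<in> l2" "x = P y"
    by blast
  have x: "x \<in> l2" and Px: "P x = x"
    using y bounded_op_l2[OF \<open>bounded_op P\<close>] idem by auto
  have "\<mu> * l2_inner x x = l2_inner (P (T x)) x"
    using PTP[OF x] Px by (simp add: l2_inner_scale_left[OF x x])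
  also have "\<dots> = l2_inner (T x) x"
    using self_adj[OF bounded_op_l2[OF T x] x] Px by simp
  finally show ?thesis
    using x \<open>x \<noteq> (\<lambda>n. 0)\<close> by blast
qed

lemma Lambda_subset_cball:
  assumes T: "bounded_op T" and bound: "\<And>x. x \<in> l2 \<Longrightarrow> l2_norm (T x) \<le> C * l2_norm x"
    and "0 < k"
  shows "Lambda k T \<subseteq> cball 0 C"
proof
  fix \<mu> assume "\<mu> \<in> Lambda k T"
  then obtain x where x: "x \<in> l2" "x \<noteq> (\<lambda>n. 0)" and eigen: "\<mu> * l2_inner x x = l2_inner (T x) x"
    using Lambda_eigenvector[OF T _ \<open>0 < k\<close>] by blast
  have "cmod \<mu> * (l2_norm x)^2 = cmod (l2_inner (T x) x)"
    using eigen by (metis l2_inner_self[OF x(1)] norm_mult norm_of_real abs_power2)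
  also have "\<dots> \<le> l2_norm (T x) * l2_norm x"
    by (rule l2_cauchy_schwarz[OF bounded_op_l2[OF T x(1)] x(1)])
  also have "\<dots> \<le> C * l2_norm x * l2_norm x"
    by (rule mult_right_mono[OF bound[OF x(1)] l2_norm_nonneg[OF x(1)]])
  also have "\<dots> = C * (l2_norm x)^2"
    by (simp add: power2_eq_square)
  finally have "cmod \<mu> * (l2_norm x)^2 \<le> C * (l2_norm x)^2" .
  moreover have "0 < (l2_norm x)^2"
    using l2_norm_eq_0_iff[OF x(1)] x(2) by simp
  ultimately show "\<mu> \<in> cball 0 C"
    by simp
qed

section \<open>Proper isometries contain the unilateral shift\<close>

lemma isometry_op_inner:
  assumes V: "isometry_op V" and "x \<in> l2" "y \<in> l2"
  shows "l2_inner (V x) (V y) = l2_inner x y"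
proof -
  have "bounded_op V" and norm_V: "\<And>z. z \<in> l2 \<Longrightarrow> l2_norm (V z) = l2_norm z"
    using V by (auto simp: isometry_op_def)
  have Vx: "V x \<in> l2" and Vy: "V y \<in> l2"
    using assms bounded_op_l2[OF \<open>bounded_op V\<close>] by auto
  have Re_eq: "Re (a * l2_inner (V x) (V y)) = Re (a * l2_inner x y)" for a
  proof -
    have "(l2_norm (\<lambda>n. a * V x n + V y n))^2 = (l2_norm (\<lambda>n. a * x n + y n))^2"
      using norm_V[OF l2_lin[OF assms(2,3)]] bounded_op_lin[OF \<open>bounded_op V\<close> assms(2,3)] by simp
    then show ?thesis
      unfolding l2_norm_lin_square[OF Vx Vy] l2_norm_lin_square[OF assms(2,3)]
      using norm_V[OF assms(2)] norm_V[OF assms(3)] by simp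
  qed
  \<comment> \<open>polarization: the real parts for \<open>a = 1\<close> and \<open>a = \<i>\<close> determine the inner product\<close>
  show ?thesis
    using Re_eq[of 1] Re_eq[of \<i>] by (simp add: complex_eq_iff)
qed

lemma isometry_op_orthonormal:
  assumes "isometry_op V" "orthonormal I u"
  shows "orthonormal I (\<lambda>i. V (u i))"
  using assms bounded_op_l2[of V]
  by (auto simp: orthonormal_def isometry_op_inner isometry_op_def)

lemma isometry_op_orthogonal_to_range:
  assumes V: "isometry_op V" and not_onto: "V ` l2 \<noteq> l2"
  shows "\<exists>d\<in>l2. d \<noteq> (\<lambda>n. 0) \<and> (\<forall>x\<in>l2. l2_inner (V x) d = 0)"
proof -
  have "bounded_op V"
    using V by (simp add: isometry_op_def)
  then have l2_V: "\<And>x. x \<in> l2 \<Longrightarrow> V x \<in> l2"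
    by (rule bounded_op_l2)
  obtain y where y: "y \<in> l2" "y \<notin> V ` l2"
    using not_onto l2_V by blast
  define f where "f j = V (unit_vec j)" for j
  have f: "orthonormal I f" for I
    unfolding f_def by (rule isometry_op_orthonormal[OF V orthonormal_unit_vec])
  define w where "w j = l2_inner y (f j)" for j
  have w: "w \<in> l2"
    unfolding w_def by (rule l2_bessel_coeffs[OF f y(1)])
  \<comment> \<open>\<open>V w\<close> is the orthogonal projection of \<open>y\<close> onto the range of \<open>V\<close>\<close>
  define d where "d = (\<lambda>n. - 1 * V w n + y n)"
  have d: "d \<in> l2"
    unfolding d_def by (rule l2_lin[OF l2_V[OF w] y(1)])
  have "l2_inner (V (unit_vec j)) d = 0" for j
  proof -
    have "l2_inner (V (unit_vec j)) (V w) = cnj (w j)"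
      using isometry_op_inner[OF V l2_unit_vec w] l2_inner_commute[OF w l2_unit_vec]
      by (simp add: l2_inner_unit_vec[OF w])
    moreover have "l2_inner (V (unit_vec j)) y = cnj (w j)"
      using l2_inner_commute[OF y(1) l2_V[OF l2_unit_vec]] by (simp add: w_def f_def)
    ultimately show ?thesis
      unfolding d_def l2_inner_lin_right[OF l2_V[OF w] y(1) l2_V[OF l2_unit_vec]] by simp
  qed
  then have "\<forall>x\<in>l2. l2_inner (V x) d = 0"
    using bounded_op_orthogonal_if_unit_vec_images[OF \<open>bounded_op V\<close> d] by blast
  moreover have "d \<noteq> (\<lambda>n. 0)"
  proof
    assume "d = (\<lambda>n. 0)"
    then have "y = V w"
      by (auto simp: d_def fun_eq_iff)
    then show False
      using y(2) w by blast
  qed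
  ultimately show ?thesis
    using d by blast
qed

lemma isometry_op_wandering_vector:
  assumes V: "isometry_op V" and not_onto: "V ` l2 \<noteq> l2"
  shows "\<exists>e\<in>l2. l2_inner e e = 1 \<and> (\<forall>x\<in>l2. l2_inner (V x) e = 0)"
proof -
  obtain d where d: "d \<in> l2" "d \<noteq> (\<lambda>n. 0)" and orth: "\<And>x. x \<in> l2 \<Longrightarrow> l2_inner (V x) d = 0"
    using isometry_op_orthogonal_to_range[OF assms] by blast
  have l2_V: "\<And>x. x \<in> l2 \<Longrightarrow> V x \<in> l2"
    using V by (simp add: isometry_op_def bounded_op_l2)
  have "l2_norm d > 0"
    using l2_norm_eq_0_iff[OF d(1)] l2_norm_nonneg[OF d(1)] d(2) by auto
  define e where "e = (\<lambda>n. of_real (1 / l2_norm d) * d n)"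
  have "e \<in> l2"
    unfolding e_def by (rule l2_scale[OF d(1)])
  moreover have "l2_inner e e = 1"
    unfolding e_def l2_inner_scale_left[OF d(1) l2_scale[OF d(1)]] l2_inner_scale_right[OF d(1) d(1)]
      l2_inner_self[OF d(1)]
    using \<open>l2_norm d > 0\<close> by (simp add: power2_eq_square)
  moreover have "l2_inner (V x) e = 0" if "x \<in> l2" for x
    unfolding e_def l2_inner_scale_right[OF d(1) l2_V[OF that]] orth[OF that] by simp
  ultimately show ?thesis
    by blast
qed

lemma isometry_op_orbit_orthonormal:
  assumes V: "isometry_op V" and e: "e \<in> l2" "l2_inner e e = 1"
    and wandering: "\<And>x. x \<in> l2 \<Longrightarrow> l2_inner (V x) e = 0"
  shows "orthonormal UNIV (\<lambda>p. (V ^^ p) e)"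
proof -
  have l2_V: "\<And>x. x \<in> l2 \<Longrightarrow> V x \<in> l2"
    using V by (simp add: isometry_op_def bounded_op_l2)
  have l2_orbit: "(V ^^ p) e \<in> l2" for p
    by (induction p) (simp_all add: e l2_V)
  have shift: "l2_inner ((V ^^ (m + q)) e) ((V ^^ q) e) = l2_inner ((V ^^ m) e) e" for m q
    by (induction q) (simp_all add: isometry_op_inner[OF V l2_orbit l2_orbit])
  have below: "l2_inner ((V ^^ p) e) ((V ^^ q) e) = of_bool (p = q)" if "q \<le> p" for p q
  proof (cases "p = q")
    case False
    then have "p = Suc (p - q - 1) + q"
      using that by simp
    then show ?thesis
      using False shift[of "Suc (p - q - 1)" q] wandering[OF l2_orbit] by simp
  qed (use shift[of 0] e in simp)
  show ?thesis
    unfolding orthonormal_def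
  proof (intro conjI ballI)
    show "l2_inner ((V ^^ p) e) ((V ^^ q) e) = of_bool (p = q)" for p q
    proof (cases "q \<le> p")
      case False
      have "l2_inner ((V ^^ p) e) ((V ^^ q) e) = cnj (l2_inner ((V ^^ q) e) ((V ^^ p) e))"
        by (rule l2_inner_commute[OF l2_orbit l2_orbit])
      moreover have "l2_inner ((V ^^ q) e) ((V ^^ p) e) = of_bool (q = p)"
        using False by (intro below) simp
      ultimately show ?thesis
        using False by simp
    qed (rule below)
  qed (rule l2_orbit)
qed

section \<open>Compressions of the unilateral shift\<close>

definition trunc_coeff :: "complex \<Rightarrow> nat \<Rightarrow> nat \<Rightarrow> complex" where
  "trunc_coeff \<mu> M n = of_real (1 / sqrt (\<Sum>m<Suc M. ((cmod \<mu>)^2)^m)) * cnj \<mu> ^ n"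

lemma trunc_coeff_sums:
  shows "(\<Sum>n<Suc M. trunc_coeff \<mu> M n * cnj (trunc_coeff \<mu> M n)) = 1"
    and "(\<Sum>n<M. trunc_coeff \<mu> M n * cnj (trunc_coeff \<mu> M (Suc n)))
      = \<mu> * of_real ((\<Sum>n<M. ((cmod \<mu>)^2)^n) / (\<Sum>n<Suc M. ((cmod \<mu>)^2)^n))"
proof -
  define r where "r = (cmod \<mu>)^2"
  define S where "S = (\<Sum>n<Suc M. r^n)"
  have "0 < S"
    unfolding S_def by (rule sum_pos2[of _ 0]) (auto simp: r_def)
  have cnj_mult: "cnj \<mu> ^ n * \<mu> ^ n = of_real (r ^ n)" for n
    by (simp add: r_def power_mult_distrib[symmetric] complex_mult_cnj cmod_power2 mult.commute)
  have sqrt_S: "of_real (sqrt S) * of_real (sqrt S) = (of_real S :: complex)"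
    using \<open>0 < S\<close> by (simp flip: of_real_mult)
  have a: "trunc_coeff \<mu> M n = of_real (1 / sqrt S) * cnj \<mu> ^ n" for n
    by (simp add: trunc_coeff_def S_def r_def)
  have "(\<Sum>n<Suc M. trunc_coeff \<mu> M n * cnj (trunc_coeff \<mu> M n)) = (\<Sum>n<Suc M. of_real (r ^ n / S))"
    using \<open>0 < S\<close> cnj_mult sqrt_S by (simp add: a mult_ac)
  also have "\<dots> = of_real ((\<Sum>n<Suc M. r ^ n) / S)"
    by (simp only: of_real_sum[symmetric] sum_divide_distrib[symmetric])
  also have "\<dots> = 1"
    unfolding S_def[symmetric] using \<open>0 < S\<close> by simp
  finally show "(\<Sum>n<Suc M. trunc_coeff \<mu> M n * cnj (trunc_coeff \<mu> M n)) = 1" .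
  have "(\<Sum>n<M. trunc_coeff \<mu> M n * cnj (trunc_coeff \<mu> M (Suc n))) = (\<Sum>n<M. \<mu> * of_real (r ^ n / S))"
    using \<open>0 < S\<close> cnj_mult sqrt_S by (simp add: a mult_ac)
  then show "(\<Sum>n<M. trunc_coeff \<mu> M n * cnj (trunc_coeff \<mu> M (Suc n)))
      = \<mu> * of_real ((\<Sum>n<M. ((cmod \<mu>)^2)^n) / (\<Sum>n<Suc M. ((cmod \<mu>)^2)^n))"
    by (simp add: r_def S_def sum_distrib_left sum_divide_distrib)
qed

lemma shift_block_in_Lambda:
  assumes T: "bounded_op T" and e: "orthonormal UNIV e" and shift: "\<And>p. T (e p) = e (Suc p)"
  shows "\<mu> * of_real ((\<Sum>n<M. ((cmod \<mu>)^2)^n) / (\<Sum>n<Suc M. ((cmod \<mu>)^2)^n)) \<in> Lambda k T"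
proof -
  define B where "B = Suc (Suc M)"
  \<comment> \<open>\<open>x i\<close> is a normalised truncation of the eigenvector \<open>\<Sum>n. cnj \<mu> ^ n * e n\<close> of the
    backward shift, moved to the \<open>i\<close>-th block of length \<open>B\<close>; the unused last index of each
    block keeps \<open>T (x i)\<close> orthogonal to \<open>x j\<close> for \<open>i \<noteq> j\<close>\<close>
  define x where "x i = lin_comb (trunc_coeff \<mu> M) (\<lambda>n. e (i * B + n)) (Suc M)" for i
  have l2_e: "\<And>p. e p \<in> l2"
    using e by (simp add: orthonormal_def)
  have B: "Suc M < B"
    by (simp add: B_def)
  have "l2_inner (x i) (x j) = of_bool (i = j)" for i j
    unfolding x_def orthonormal_blocks_inner[OF e B] trunc_coeff_sums(1) by simp
  then have x_orthonormal: "orthonormal {..<k} x"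
    unfolding orthonormal_def x_def using l2_lin_comb[OF l2_e] by simp
  have Tx: "T (x i) = lin_comb (trunc_coeff \<mu> M) (\<lambda>n. e (i * B + Suc n)) (Suc M)" for i
    unfolding x_def by (simp add: bounded_op_lin_comb[OF T l2_e] shift)
  show ?thesis
  proof (rule orthonormal_compression_in_Lambda[OF T x_orthonormal])
    show "l2_inner (T (x i)) (x j)
        = \<mu> * of_real ((\<Sum>n<M. ((cmod \<mu>)^2)^n) / (\<Sum>n<Suc M. ((cmod \<mu>)^2)^n)) * of_bool (i = j)" for i j
      unfolding Tx unfolding x_def orthonormal_shifted_blocks_inner[OF e B] trunc_coeff_sums(2) by simp
  qed
qed

lemma geometric_partial_sums_ratio_tendsto_1:
  fixes r :: real
  assumes "\<bar>r\<bar> < 1"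
  shows "(\<lambda>M. (\<Sum>n<M. r^n) / (\<Sum>n<Suc M. r^n)) \<longlonglongrightarrow> 1"
proof -
  have "(\<lambda>M. \<Sum>n<M. r^n) \<longlonglongrightarrow> 1 / (1 - r)"
    using geometric_sums[of r] assms by (simp add: sums_def)
  moreover from this have "(\<lambda>M. \<Sum>n<Suc M. r^n) \<longlonglongrightarrow> 1 / (1 - r)"
    by (rule LIMSEQ_Suc)
  ultimately have "(\<lambda>M. (\<Sum>n<M. r^n) / (\<Sum>n<Suc M. r^n)) \<longlonglongrightarrow> (1 / (1 - r)) / (1 / (1 - r))"
    using assms by (intro tendsto_divide) auto
  moreover have "r \<noteq> 1"
    using assms by auto
  ultimately show ?thesis
    by simp
qed

lemma shift_ball_subset_closure_Lambda:
  assumes T: "bounded_op T" and e: "orthonormal UNIV e" and shift: "\<And>p. T (e p) = e (Suc p)"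
  shows "ball 0 1 \<subseteq> closure (Lambda k T)"
proof
  fix \<mu> :: complex assume "\<mu> \<in> ball 0 1"
  define r where "r = (cmod \<mu>)^2"
  have "\<bar>r\<bar> < 1"
    using \<open>\<mu> \<in> ball 0 1\<close> by (simp add: r_def abs_square_less_1)
  then have "(\<lambda>M. \<mu> * of_real ((\<Sum>n<M. r^n) / (\<Sum>n<Suc M. r^n))) \<longlonglongrightarrow> \<mu> * of_real 1"
    by (intro tendsto_mult tendsto_const tendsto_of_real geometric_partial_sums_ratio_tendsto_1)
  moreover have "\<mu> * of_real ((\<Sum>n<M. r^n) / (\<Sum>n<Suc M. r^n)) \<in> Lambda k T" for M
    unfolding r_def by (rule shift_block_in_Lambda[OF T e shift])
  ultimately show "\<mu> \<in> closure (Lambda k T)"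
    unfolding closure_sequential by (intro exI[of _ "\<lambda>M. \<mu> * of_real ((\<Sum>n<M. r^n) / (\<Sum>n<Suc M. r^n))"]) simp
qed

theorem corollary2p7:
  fixes V :: "(nat \<Rightarrow> complex) \<Rightarrow> (nat \<Rightarrow> complex)" and k :: nat
  assumes "isometry_op V" and "\<not> unitary_op V" and "k \<ge> 1"
  shows "closure (Lambda k V) = cball 0 1"
proof -
  have "bounded_op V" and norm_V: "\<And>x. x \<in> l2 \<Longrightarrow> l2_norm (V x) = l2_norm x"
    using assms(1) by (auto simp: isometry_op_def)
  have "Lambda k V \<subseteq> cball 0 1"
    using \<open>k \<ge> 1\<close> by (intro Lambda_subset_cball[OF \<open>bounded_op V\<close>]) (simp_all add: norm_V)
  then have "closure (Lambda k V) \<subseteq> cball 0 1"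
    by (rule closure_minimal) simp
  moreover obtain e where "e \<in> l2" "l2_inner e e = 1" "\<And>x. x \<in> l2 \<Longrightarrow> l2_inner (V x) e = 0"
    using isometry_op_wandering_vector assms(1,2) unfolding unitary_op_def by blast
  then have "orthonormal UNIV (\<lambda>p. (V ^^ p) e)"
    by (rule isometry_op_orbit_orthonormal[OF assms(1)])
  then have "ball 0 1 \<subseteq> closure (Lambda k V)"
    by (rule shift_ball_subset_closure_Lambda[OF \<open>bounded_op V\<close>]) simp
  then have "cball 0 1 \<subseteq> closure (Lambda k V)"
    using closure_mono[of "ball 0 1" "closure (Lambda k V)"] by simp
  ultimately show ?thesis
    by (rule equalityI)
qed

end
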